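(* Let $A\in\mathbb{R}^{n\times n}$, let $W\in\mathbb{R}^{n\times n}$ be symmetric positive definite, let $C=\mathrm{diag}(C_{11},\dots,C_{nn})$ be diagonal positive definite and $V=\mathrm{diag}(\sigma_1^2,\dots,\sigma_n^2)$ with $\sigma_j>0$. Let $\Sigma$ be the unique positive semidefinite solution of $\Sigma=A\Sigma A^T-A\Sigma C^T(C\Sigma C^T+V)^{-1}C\Sigma A^T+W$ (the steady-state a priori Kalman filter error covariance). Then $$\ln\det\Sigma\le\mathrm{tr}(A^TA)\frac{\sigma_l^2}{C_l^2}+\mathrm{tr}\,W.$$
   Context: The index $l$ is defined by $l=\arg\min_{1\le j\le n}C_{jj}^2/\sigma_j^2$, and $C_l:=C_{ll}$. *)

theory Defs
  imports "HOL-Analysis.Analysis"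
begin

definition psd_mat :: "real^'n^'n \<Rightarrow> bool" where
  "psd_mat M \<longleftrightarrow> transpose M = M \<and> (\<forall>x. 0 \<le> x \<bullet> (M *v x))"

definition pd_mat :: "real^'n^'n \<Rightarrow> bool" where
  "pd_mat M \<longleftrightarrow> transpose M = M \<and> (\<forall>x. x \<noteq> 0 \<longrightarrow> 0 < x \<bullet> (M *v x))"

definition diag_mat :: "('n \<Rightarrow> real) \<Rightarrow> real^'n^'n" where
  "diag_mat d = (\<chi> i j. if i = j then d i else 0)"

definition riccati :: "real^'n^'n \<Rightarrow> real^'n^'n \<Rightarrow> real^'n^'n \<Rightarrow> real^'n^'n \<Rightarrow> real^'n^'n \<Rightarrow> real^'n^'n" where
  "riccati A C V W S =
     A ** S ** transpose A
     - A ** S ** transpose C ** matrix_inv (C ** S ** transpose C + V) ** C ** S ** transpose A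
     + W"

end

theory Submission
  imports Defs
begin

(* Along the fixed point, the Riccati equation reads x' Sigma x = q (A' x) + x' W x, where q is the
   quadratic form of the a posteriori covariance Sigma - Sigma C' (C Sigma C' + V)^-1 C Sigma.
   Completing squares gives 0 <= q y <= z' V z whenever C' z = y; hence Sigma is positive definite
   and, taking z = C^-1 A' e_i, Sigma_ii <= (sigma_l^2 / C_l^2) sum_j A_ij^2 + W_ii.
   Hadamard's inequality det Sigma <= prod_i Sigma_ii and ln x <= x - 1 give
   ln det Sigma <= tr Sigma, and summing the diagonal bounds finishes the proof. *)

lemma inner_matrix_vector_transpose: "x \<bullet> (M *v y) = (transpose M *v x) \<bullet> (y :: real^'n)"
  by (simp add: dot_lmul_matrix)

lemma inner_sym_matrix: "transpose M = M \<Longrightarrow> x \<bullet> (M *v y) = (M *v x) \<bullet> (y :: real^'n)"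
  by (metis inner_matrix_vector_transpose)

lemma inner_axis_matrix_axis: "axis i 1 \<bullet> (M *v axis j 1) = (M :: real^'n^'m)$i$j"
  unfolding inner_axis' by (simp add: matrix_vector_mult_def axis_def if_distrib[of "\<lambda>t. _ * t"] sum.delta'
      cong: if_cong)

lemma inner_congruence:
  fixes M :: "real^'n^'n" and B :: "real^'m^'n"
  shows "x \<bullet> ((transpose B ** M ** B) *v x) = (B *v x) \<bullet> (M *v (B *v x))"
  unfolding matrix_vector_mul_assoc[symmetric]
  using inner_matrix_vector_transpose[of x "transpose B" "M *v (B *v x)"]
  unfolding transpose_transpose .

lemma transpose_eq_self_nth: "transpose M = M \<Longrightarrow> M$i$j = M$j$i"
  by (metis transpose_def vec_lambda_beta)

lemma matrix_inv_right: "invertible M \<Longrightarrow> M ** matrix_inv M = mat 1"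
  unfolding invertible_def matrix_inv_def by (rule someI2_ex) auto

lemma psd_mat_congruence:
  fixes B :: "real^'m^'n"
  assumes "psd_mat M"
  shows "psd_mat (transpose B ** M ** B)"
  using assms unfolding psd_mat_def
  by (simp add: matrix_transpose_mul matrix_mul_assoc inner_congruence)

lemma pd_mat_imp_psd_mat: "pd_mat M \<Longrightarrow> psd_mat M"
  unfolding pd_mat_def psd_mat_def by (metis inner_zero_left order.refl less_imp_le)

lemma pd_mat_mult_vec_eq_0: "pd_mat M \<Longrightarrow> M *v x = 0 \<Longrightarrow> x = 0"
  unfolding pd_mat_def by force

lemma pd_mat_invertible: "pd_mat M \<Longrightarrow> invertible M"
  using pd_mat_mult_vec_eq_0 invertible_left_inverse matrix_left_invertible_ker by blast

lemma pd_mat_congruence: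
  assumes "pd_mat M" and "invertible B"
  shows "pd_mat (transpose B ** M ** B)"
proof -
  have "0 < x \<bullet> ((transpose B ** M ** B) *v x)" if "x \<noteq> 0" for x
  proof -
    have "B *v x \<noteq> 0"
      using that assms(2) inj_matrix_vector_mult[of B] by (metis matrix_vector_mult_0_right injD)
    hence "0 < (B *v x) \<bullet> (M *v (B *v x))" using assms(1) unfolding pd_mat_def by blast
    thus ?thesis by (simp only: inner_congruence)
  qed
  with psd_mat_congruence[OF pd_mat_imp_psd_mat[OF assms(1)]] show ?thesis
    unfolding pd_mat_def psd_mat_def by blast
qed

lemma pd_mat_add: "psd_mat A \<Longrightarrow> pd_mat B \<Longrightarrow> pd_mat (A + B)"
  unfolding psd_mat_def pd_mat_def
  by (simp add: matrix_vector_mult_add_rdistrib inner_add_right transpose_def vec_eq_iff add_nonneg_pos)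

lemma pd_mat_diag_pos: "pd_mat M \<Longrightarrow> 0 < M$i$i"
  unfolding pd_mat_def by (metis inner_axis_matrix_axis axis_eq_0_iff zero_neq_one)

lemma transpose_diag_mat [simp]: "transpose (diag_mat d) = diag_mat d"
  by (simp add: diag_mat_def transpose_def vec_eq_iff)

lemma diag_mat_mult_vec: "diag_mat d *v x = (\<chi> i. d i * x$i)"
  by (simp add: diag_mat_def matrix_vector_mult_def vec_eq_iff if_distrib[of "\<lambda>t. t * _"] sum.delta
      cong: if_cong)

lemma inner_diag_mat: "x \<bullet> (diag_mat d *v x) = (\<Sum>i\<in>UNIV. d i * (x$i)\<^sup>2)"
  by (simp add: diag_mat_mult_vec inner_vec_def power2_eq_square algebra_simps)

lemma pd_mat_diag_mat:
  assumes "\<And>i. 0 < d i"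
  shows "pd_mat (diag_mat d)"
proof -
  have "0 < x \<bullet> (diag_mat d *v x)" if x: "x \<noteq> 0" for x
  proof -
    obtain i where "x$i \<noteq> 0" using x by (auto simp: vec_eq_iff)
    hence "0 < d i * (x$i)\<^sup>2" using assms by simp
    thus ?thesis unfolding inner_diag_mat
      by (rule sum_pos2[OF finite UNIV_I]) (simp add: assms less_imp_le)
  qed
  thus ?thesis by (simp add: pd_mat_def)
qed

definition mat1_row_upd :: "'n \<Rightarrow> real^'n \<Rightarrow> real^'n^'n" where
  "mat1_row_upd k \<beta> = (\<chi> i j. if i = k then \<beta>$j else if i = j then 1 else 0)"

lemma det_mat1_row_upd:
  fixes \<beta> :: "real^'n"
  shows "det (mat1_row_upd k \<beta>) = \<beta>$k"
proof -
  define D where "D = mat1_row_upd k (axis k (\<beta>$k))"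
  define x :: "real^'n" where "x = (\<Sum>j\<in>UNIV-{k}. \<beta>$j *s axis j 1)"
  have "row j D = axis j 1" if "j \<noteq> k" for j
    using that by (auto simp: vec_eq_iff D_def mat1_row_upd_def row_def axis_def)
  hence "x \<in> vec.span {row j D |j. j \<noteq> k}"
    unfolding x_def by (intro vec.span_sum vec.span_scale vec.span_base) force
  hence "det (\<chi> i. if i = k then row k D + x else row i D) = det D"
    by (rule det_row_span)
  moreover have "(\<chi> i. if i = k then row k D + x else row i D) = mat1_row_upd k \<beta>"
    by (auto simp: vec_eq_iff D_def mat1_row_upd_def x_def row_def axis_def sum_component
          if_distrib[of "\<lambda>t. _ * t"] sum.delta cong: if_cong)
  moreover have "det D = \<beta>$k"
  proof -
    have "D$i$j = (if i = j then (if i = k then \<beta>$k else 1) else 0)" for i j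
      by (simp add: D_def mat1_row_upd_def axis_def)
    thus ?thesis by (subst det_diagonal) (simp_all add: prod.delta)
  qed
  ultimately show ?thesis by simp
qed

lemma matrix_mul_mat1_row_upd:
  "N ** mat1_row_upd k \<beta> = (\<chi> a j. (if j = k then 0 else N$a$j) + N$a$k * \<beta>$j)"
  by (auto simp: vec_eq_iff matrix_matrix_mult_def mat1_row_upd_def if_distrib[of "\<lambda>t. _ * t"]
        sum.If_cases Int_commute)

(* Symmetric Gaussian elimination of row and column k; away from k this is the Schur complement
   of the pivot M$k$k. *)
definition schur_elim :: "real^'n^'n \<Rightarrow> 'n \<Rightarrow> real^'n^'n" where
  "schur_elim M k = (\<chi> i j. if i = k \<or> j = k then (if i = j then M$k$k else 0)
                            else M$i$j - M$i$k * M$k$j / M$k$k)"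

lemma schur_elim_congruence:
  assumes "transpose M = M" and "M$k$k \<noteq> 0"
  defines "B \<equiv> mat1_row_upd k (\<chi> j. if j = k then 1 else - M$k$j / M$k$k)"
  shows "schur_elim M k = transpose B ** M ** B"
proof -
  have sym: "M$i$j = M$j$i" for i j
    using assms(1) by (rule transpose_eq_self_nth)
  define N where "N = M ** B"
  have N: "N$i$j = (if j = k then M$i$k else M$i$j - M$i$k * M$k$j / M$k$k)" for i j
    by (simp add: N_def B_def matrix_mul_mat1_row_upd)
  have "transpose B ** M ** B = transpose (transpose N ** B)"
    by (simp add: N_def matrix_transpose_mul matrix_mul_assoc)
  hence "(transpose B ** M ** B)$i$j = (if i = k then N$k$j else N$i$j - M$k$i / M$k$k * N$k$j)"
    for i j by (simp add: B_def matrix_mul_mat1_row_upd transpose_def)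
  moreover have "schur_elim M k $i$j = (if i = k then N$k$j else N$i$j - M$k$i / M$k$k * N$k$j)"
    for i j using assms(2) sym[of i k] by (cases "i = k"; cases "j = k") (simp_all add: N schur_elim_def)
  ultimately show ?thesis by (simp add: vec_eq_iff)
qed

lemma pd_mat_schur_elim:
  assumes "pd_mat M"
  shows "pd_mat (schur_elim M k)"
proof -
  have "M$k$k \<noteq> 0" using pd_mat_diag_pos[OF assms, of k] by simp
  with assms show ?thesis
    unfolding pd_mat_def[of M]
    by (simp add: schur_elim_congruence pd_mat_congruence[OF assms] invertible_det_nz det_mat1_row_upd)
qed

lemma det_schur_elim:
  assumes "pd_mat M"
  shows "det (schur_elim M k) = det M"
proof -
  have "M$k$k \<noteq> 0" using pd_mat_diag_pos[OF assms, of k] by simp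
  with assms show ?thesis
    unfolding pd_mat_def[of M] by (simp add: schur_elim_congruence det_mul det_mat1_row_upd)
qed

(* Induction over the set S of rows not yet reduced to their diagonal entry: eliminating the
   pivot k preserves the determinant and can only decrease diagonal entries. *)
lemma hadamard_inequality_aux:
  assumes "finite S" and "pd_mat M" and "\<And>i j. i \<notin> S \<Longrightarrow> i \<noteq> j \<Longrightarrow> M$i$j = 0"
  shows "0 < det M \<and> det M \<le> (\<Prod>i\<in>UNIV. M$i$i)"
  using assms
proof (induction S arbitrary: M rule: finite_induct)
  case empty
  hence "det M = (\<Prod>i\<in>UNIV. M$i$i)" by (intro det_diagonal) simp
  thus ?case using pd_mat_diag_pos[OF empty.prems(1)] by (simp add: prod_pos)
next
  case (insert k S)
  define M' where "M' = schur_elim M k"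
  have sym: "M$i$j = M$j$i" for i j
    using insert.prems(1) unfolding pd_mat_def by (blast intro: transpose_eq_self_nth)
  have "M'$i$j = 0" if "i \<notin> S" "i \<noteq> j" for i j
  proof (cases "i = k")
    case False
    hence "M$i$k = 0" "M$i$j = 0" using that insert.prems(2) by auto
    thus ?thesis using that(2) by (simp add: M'_def schur_elim_def)
  qed (use that in \<open>simp add: M'_def schur_elim_def\<close>)
  hence IH: "0 < det M' \<and> det M' \<le> (\<Prod>i\<in>UNIV. M'$i$i)"
    by (intro insert.IH) (simp_all add: M'_def pd_mat_schur_elim[OF insert.prems(1)])
  have "M'$i$i \<le> M$i$i" for i
  proof (cases "i = k")
    case False
    have "0 \<le> (M$i$k)\<^sup>2 / M$k$k" using pd_mat_diag_pos[OF insert.prems(1), of k] by simp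
    thus ?thesis using False sym[of k i] by (simp add: M'_def schur_elim_def power2_eq_square)
  qed (simp add: M'_def schur_elim_def)
  hence "(\<Prod>i\<in>UNIV. M'$i$i) \<le> (\<Prod>i\<in>UNIV. M$i$i)"
    using pd_mat_diag_pos[OF pd_mat_schur_elim[OF insert.prems(1)]]
    by (intro prod_mono) (simp add: M'_def less_imp_le)
  moreover have "det M' = det M" unfolding M'_def by (rule det_schur_elim[OF insert.prems(1)])
  ultimately show ?case using IH by simp
qed

lemma hadamard_inequality:
  assumes "pd_mat M"
  shows "0 < det M" and "det M \<le> (\<Prod>i\<in>UNIV. M$i$i)"
  using hadamard_inequality_aux[of UNIV M] assms by auto

lemma ln_det_le_trace:
  fixes M :: "real^'n^'n"
  assumes "pd_mat M"
  shows "ln (det M) \<le> trace M - CARD('n)"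
proof -
  have pos: "0 < M$i$i" for i by (rule pd_mat_diag_pos[OF assms])
  have "ln (det M) \<le> ln (\<Prod>i\<in>UNIV. M$i$i)"
    using hadamard_inequality[OF assms] by simp
  also have "\<dots> = (\<Sum>i\<in>UNIV. ln (M$i$i))"
    using pos by (intro ln_prod) (auto simp: less_imp_neq[symmetric])
  also have "\<dots> \<le> (\<Sum>i\<in>UNIV. M$i$i - 1)"
    by (intro sum_mono ln_le_minus_one pos)
  also have "\<dots> = trace M - CARD('n)" by (simp add: trace_def sum_subtractf)
  finally show ?thesis .
qed

(* y' (S - S C' (C S C' + V)^-1 C S) y: the quadratic form of the a posteriori covariance after
   a measurement update with prior covariance S, observation matrix C and noise covariance V. *)
definition posterior_form :: "real^'n^'m \<Rightarrow> real^'m^'m \<Rightarrow> real^'n^'n \<Rightarrow> real^'n \<Rightarrow> real" where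
  "posterior_form C V S y = y \<bullet> (S *v y)
     - (C *v (S *v y)) \<bullet> (matrix_inv (C ** S ** transpose C + V) *v (C *v (S *v y)))"

lemma pd_mat_innovation:
  fixes C :: "real^'n^'m"
  assumes "psd_mat S" and "pd_mat V"
  shows "pd_mat (C ** S ** transpose C + V)"
  using pd_mat_add[OF psd_mat_congruence[OF assms(1), of "transpose C"] assms(2)] by simp

lemma innovation_mult_inv:
  fixes C :: "real^'n^'m" and w :: "real^'m"
  assumes "psd_mat S" and "pd_mat V"
  shows "(C ** S ** transpose C + V) *v (matrix_inv (C ** S ** transpose C + V) *v w) = w"
  by (simp add: matrix_vector_mul_assoc matrix_inv_right pd_mat_invertible pd_mat_innovation[OF assms])

lemma posterior_form_eq:
  fixes C :: "real^'n^'m" and y :: "real^'n"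
  assumes S: "psd_mat S" and V: "pd_mat V"
  defines "v \<equiv> matrix_inv (C ** S ** transpose C + V) *v (C *v (S *v y))"
  defines "u \<equiv> y - transpose C *v v"
  shows "posterior_form C V S y = u \<bullet> (S *v u) + v \<bullet> (V *v v)"
proof -
  define w where "w = C *v (S *v y)"
  have Ssym: "a \<bullet> (S *v b) = (S *v a) \<bullet> b" for a b
    using S unfolding psd_mat_def by (simp add: inner_sym_matrix)
  have Ct: "(transpose C *v a) \<bullet> b = a \<bullet> (C *v b)" for a b
    by (simp add: inner_matrix_vector_transpose)
  have "w = C *v (S *v (transpose C *v v)) + V *v v"
    using innovation_mult_inv[OF S V, of C w, folded v_def[folded w_def]]
    by (simp only: matrix_vector_mult_add_rdistrib matrix_vector_mul_assoc[symmetric])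
  hence Gv: "v \<bullet> w = (transpose C *v v) \<bullet> (S *v (transpose C *v v)) + v \<bullet> (V *v v)"
    by (simp only: inner_add_right Ct)
  have CvSy: "(transpose C *v v) \<bullet> (S *v y) = v \<bullet> w"
    by (simp only: Ct w_def)
  have ySCv: "y \<bullet> (S *v (transpose C *v v)) = v \<bullet> w"
    using Ssym[of y "transpose C *v v"] CvSy inner_commute[of "S *v y"] by simp
  show ?thesis
    unfolding posterior_form_def u_def w_def[symmetric] v_def[folded w_def, symmetric]
      matrix_vector_mult_diff_distrib inner_diff_left inner_diff_right CvSy ySCv
    using Gv inner_commute[of v w] by linarith
qed

lemma posterior_form_nonneg:
  assumes "psd_mat S" and "pd_mat V"
  shows "0 \<le> posterior_form C V S y"
  using assms pd_mat_imp_psd_mat[OF assms(2)] unfolding posterior_form_eq[OF assms] psd_mat_def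
  by (intro add_nonneg_nonneg) blast+

lemma posterior_form_le:
  fixes C :: "real^'n^'m" and z :: "real^'m"
  assumes S: "psd_mat S" and V: "pd_mat V" and z: "transpose C *v z = y"
  shows "posterior_form C V S y \<le> z \<bullet> (V *v z)"
proof -
  define G where "G = C ** S ** transpose C + V"
  define w where "w = C *v (S *v y)"
  define v where "v = matrix_inv G *v w"
  have Gv: "G *v v = w"
    unfolding v_def G_def by (rule innovation_mult_inv[OF S V])
  have Gsym: "a \<bullet> (G *v b) = (G *v a) \<bullet> b" for a b
    using pd_mat_innovation[OF S V] unfolding G_def pd_mat_def by (simp add: inner_sym_matrix)
  have Ct: "a \<bullet> (C *v b) = (transpose C *v a) \<bullet> b" for a b
    by (rule inner_matrix_vector_transpose)
  have zGz: "z \<bullet> (G *v z) = y \<bullet> (S *v y) + z \<bullet> (V *v z)"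
    unfolding G_def by (simp only: matrix_vector_mult_add_rdistrib matrix_vector_mul_assoc[symmetric]
        inner_add_right Ct z)
  have zw: "z \<bullet> w = y \<bullet> (S *v y)"
    unfolding w_def by (simp only: Ct z)
  have "0 \<le> (z - v) \<bullet> (G *v (z - v))"
    using pd_mat_innovation[OF S V] unfolding G_def pd_mat_def
    by (metis order.refl inner_zero_left less_imp_le)
  also have "\<dots> = z \<bullet> (G *v z) - 2 * (z \<bullet> w) + v \<bullet> w"
    unfolding matrix_vector_mult_diff_distrib inner_diff_left inner_diff_right Gv
    using Gsym[of v z] Gv by (simp add: inner_commute)
  finally show ?thesis
    unfolding posterior_form_def w_def[symmetric] G_def[symmetric] v_def[symmetric] zGz zw
    by (simp add: inner_commute)
qed

lemma riccati_quadratic_form: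
  assumes "transpose S = S"
  shows "x \<bullet> (riccati A C V W S *v x) = posterior_form C V S (transpose A *v x) + x \<bullet> (W *v x)"
proof -
  define y where "y = transpose A *v x"
  define H where "H = matrix_inv (C ** S ** transpose C + V)"
  have "riccati A C V W S *v x
      = A *v (S *v y) - A *v (S *v (transpose C *v (H *v (C *v (S *v y))))) + W *v x"
    unfolding riccati_def y_def H_def
    by (simp only: matrix_vector_mult_add_rdistrib matrix_vector_mult_diff_rdistrib
        matrix_vector_mul_assoc[symmetric])
  moreover have "x \<bullet> (A *v b) = y \<bullet> b" for b
    unfolding y_def by (rule inner_matrix_vector_transpose)
  moreover have "y \<bullet> (S *v (transpose C *v b)) = (C *v (S *v y)) \<bullet> b" for b
    using assms by (simp only: inner_sym_matrix inner_matrix_vector_transpose transpose_transpose)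
  ultimately show ?thesis
    unfolding posterior_form_def y_def[symmetric] H_def[symmetric]
    by (simp add: inner_add_right inner_diff_right)
qed

lemma pd_mat_riccati_fixpoint:
  assumes "psd_mat S" and "pd_mat V" and "pd_mat W" and "S = riccati A C V W S"
  shows "pd_mat S"
proof -
  have sym: "transpose S = S" using assms(1) by (simp add: psd_mat_def)
  have "0 < x \<bullet> (S *v x)" if "x \<noteq> 0" for x
  proof -
    have "0 < x \<bullet> (W *v x)" using assms(3) that by (simp add: pd_mat_def)
    moreover have "0 \<le> posterior_form C V S (transpose A *v x)"
      by (rule posterior_form_nonneg[OF assms(1,2)])
    ultimately show ?thesis
      using riccati_quadratic_form[OF sym, of x A C V W] assms(4) by simp
  qed
  with sym show ?thesis by (simp add: pd_mat_def)
qed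

lemma riccati_fixpoint_diag_le:
  fixes A S W :: "real^'n^'n"
  assumes "psd_mat S" and "\<And>j. 0 < c j" and "\<And>j. 0 < \<sigma> j"
    and "S = riccati A (diag_mat c) (diag_mat (\<lambda>j. (\<sigma> j)\<^sup>2)) W S"
  shows "S$i$i \<le> (\<Sum>j\<in>UNIV. (\<sigma> j / c j)\<^sup>2 * (A$i$j)\<^sup>2) + W$i$i"
proof -
  define V where "V = diag_mat (\<lambda>j. (\<sigma> j)\<^sup>2)"
  define y where "y = transpose A *v axis i 1"
  define z where "z = (\<chi> j. A$i$j / c j)"
  have V: "pd_mat V"
    unfolding V_def by (intro pd_mat_diag_mat) (simp add: assms(3) less_imp_neq[symmetric])
  have "y = (\<chi> j. A$i$j)"
    using inner_axis_matrix_axis[of _ "transpose A" i]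
    by (simp add: y_def vec_eq_iff inner_axis' transpose_def)
  hence "transpose (diag_mat c) *v z = y"
    by (simp add: diag_mat_mult_vec z_def vec_eq_iff assms(2) less_imp_neq[symmetric])
  hence "posterior_form (diag_mat c) V S y \<le> z \<bullet> (V *v z)"
    by (rule posterior_form_le[OF assms(1) V])
  also have "\<dots> = (\<Sum>j\<in>UNIV. (\<sigma> j / c j)\<^sup>2 * (A$i$j)\<^sup>2)"
    by (simp add: V_def inner_diag_mat z_def power_divide)
  finally have "posterior_form (diag_mat c) V S y \<le> (\<Sum>j\<in>UNIV. (\<sigma> j / c j)\<^sup>2 * (A$i$j)\<^sup>2)" .
  moreover have "S$i$i = axis i 1 \<bullet> (riccati A (diag_mat c) V W S *v axis i 1)"
    unfolding V_def by (metis assms(4) inner_axis_matrix_axis)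
  moreover have "\<dots> = posterior_form (diag_mat c) V S y + W$i$i"
    using riccati_quadratic_form[of S "axis i 1" A "diag_mat c" V W] assms(1)
    unfolding psd_mat_def y_def inner_axis_matrix_axis by blast
  ultimately show ?thesis by linarith
qed

lemma trace_transpose_mult_self: "trace (transpose A ** A) = (\<Sum>i\<in>UNIV. \<Sum>j\<in>UNIV. (A$i$j)\<^sup>2)"
  unfolding trace_def matrix_matrix_mult_def transpose_def
  by (simp add: power2_eq_square) (rule sum.swap)

theorem theorem4:
  fixes A W \<Sigma> :: "real^'n^'n"
    and c \<sigma> :: "'n \<Rightarrow> real"
    and l :: 'n
  assumes W_pd: "pd_mat W"
    and c_pos: "\<And>j. c j > 0"
    and \<sigma>_pos: "\<And>j. \<sigma> j > 0"
    and l_min: "\<And>j. (c l)\<^sup>2 / (\<sigma> l)\<^sup>2 \<le> (c j)\<^sup>2 / (\<sigma> j)\<^sup>2"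
    and \<Sigma>_psd: "psd_mat \<Sigma>"
    and \<Sigma>_sol: "\<Sigma> = riccati A (diag_mat c) (diag_mat (\<lambda>j. (\<sigma> j)\<^sup>2)) W \<Sigma>"
    and \<Sigma>_unique: "\<And>S. psd_mat S \<Longrightarrow> S = riccati A (diag_mat c) (diag_mat (\<lambda>j. (\<sigma> j)\<^sup>2)) W S \<Longrightarrow> S = \<Sigma>"
  shows "ln (det \<Sigma>) \<le> trace (transpose A ** A) * ((\<sigma> l)\<^sup>2 / (c l)\<^sup>2) + trace W"
proof -
  define s where "s = (\<sigma> l)\<^sup>2 / (c l)\<^sup>2"
  have ratio: "(\<sigma> j / c j)\<^sup>2 \<le> s" for j
  proof -
    have "inverse ((c j)\<^sup>2 / (\<sigma> j)\<^sup>2) \<le> inverse ((c l)\<^sup>2 / (\<sigma> l)\<^sup>2)"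
      using c_pos[of l] \<sigma>_pos[of l] by (intro le_imp_inverse_le l_min) simp
    thus ?thesis by (simp add: s_def power_divide)
  qed
  have "pd_mat \<Sigma>"
    by (rule pd_mat_riccati_fixpoint[OF \<Sigma>_psd _ W_pd \<Sigma>_sol], rule pd_mat_diag_mat)
      (simp add: \<sigma>_pos less_imp_neq[symmetric])
  hence "ln (det \<Sigma>) \<le> trace \<Sigma>"
    using ln_det_le_trace[of \<Sigma>] by simp
  also have "trace \<Sigma> \<le> (\<Sum>i\<in>UNIV. s * (\<Sum>j\<in>UNIV. (A$i$j)\<^sup>2) + W$i$i)"
    unfolding trace_def
  proof (rule sum_mono)
    fix i
    have "(\<Sum>j\<in>UNIV. (\<sigma> j / c j)\<^sup>2 * (A$i$j)\<^sup>2) \<le> s * (\<Sum>j\<in>UNIV. (A$i$j)\<^sup>2)"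
      unfolding sum_distrib_left using ratio by (intro sum_mono mult_right_mono) simp_all
    thus "\<Sigma>$i$i \<le> s * (\<Sum>j\<in>UNIV. (A$i$j)\<^sup>2) + W$i$i"
      using riccati_fixpoint_diag_le[OF \<Sigma>_psd c_pos \<sigma>_pos \<Sigma>_sol, of i] by linarith
  qed
  also have "\<dots> = trace (transpose A ** A) * s + trace W"
    unfolding trace_transpose_mult_self by (simp add: trace_def sum.distrib sum_distrib_left mult.commute)
  finally show ?thesis unfolding s_def .
qed

end
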